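(* Let $p$ be an odd prime, $k\ge 1$, and let $f:\mathbb{F}_{p^{2k}}\to\mathbb{F}_p$ satisfy Condition A with sign $\epsilon\in\{1,-1\}$. For $0\le i\le p-1$ let $D_i=\{x\in\mathbb{F}_{p^{2k}} : f(x)=i\}$. Then (1) $|D_1|=|D_2|=\cdots=|D_{p-1}|$; (2) $|D_0|=p^{2k-1}+\epsilon(p^k-p^{k-1})$ and $|D_i|=p^{2k-1}-\epsilon p^{k-1}$ for every $1\le i\le p-1$.
   Context: Let $\zeta_p$ be a primitive complex $p$-th root of unity and $\mathrm{tr}:\mathbb{F}_{p^{n}}\to\mathbb{F}_p$ the absolute trace $\mathrm{tr}(x)=\sum_{i=0}^{n-1}x^{p^i}$. For $f:\mathbb{F}_{p^n}\to\mathbb{F}_p$ the Walsh transform is $\mathcal{W}_f(b)=\sum_{x\in\mathbb{F}_{p^n}}\zeta_p^{f(x)+\mathrm{tr}(bx)}$, $b\in\mathbb{F}_{p^n}$. Condition A: $p$ is an odd prime and $f:\mathbb{F}_{p^{2k}}\to\mathbb{F}_p$ satisfies $f(0)=0$, $f(-x)=f(x)$ for all $x$; there is an integer $l$ with $\gcd(l-1,p-1)=1$ such that $f(\alpha x)=\alpha^l f(x)$ for all $\alpha\in\mathbb{F}_p$, $x\in\mathbb{F}_{p^{2k}}$; and there exist a constant $\epsilon\in\{1,-1\}$ and a function $f^*:\mathbb{F}_{p^{2k}}\to\mathbb{F}_p$ such that $\mathcal{W}_f(b)=\epsilon p^k\zeta_p^{f^*(b)}$ for all $b\in\mathbb{F}_{p^{2k}}$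 (i.e. $f$ is a weakly regular bent function; one writes $\epsilon=(-1)^{(p-1)k/2}\mu$ with $\mu=\pm1$). *)

theory Defs
  imports Complex_Main "HOL-Computational_Algebra.Primes"
begin

text \<open>The finite field F_{p^n} is modelled as a finite field type 'a with CARD('a) = p^n.
  Elements of the prime field F_p are identified with the naturals 0..p-1
  (via of_nat inside 'a).\<close>

definition fp_val :: "nat \<Rightarrow> 'a::{field,finite} \<Rightarrow> nat" where
  "fp_val p y = (THE i. i < p \<and> of_nat i = y)"

definition abs_trace :: "nat \<Rightarrow> nat \<Rightarrow> 'a::{field,finite} \<Rightarrow> nat" where
  "abs_trace p n x = fp_val p (\<Sum>i<n. x ^ (p ^ i))"

definition walsh :: "nat \<Rightarrow> nat \<Rightarrow> complex \<Rightarrow> ('a::{field,finite} \<Rightarrow> nat) \<Rightarrow> 'a \<Rightarrow> complex" where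
  "walsh p n \<zeta> f b = (\<Sum>x\<in>(UNIV::'a set). \<zeta> ^ (f x + abs_trace p n (b * x)))"

definition conditionA :: "nat \<Rightarrow> nat \<Rightarrow> complex \<Rightarrow> ('a::{field,finite} \<Rightarrow> nat) \<Rightarrow> int \<Rightarrow> bool" where
  "conditionA p k \<zeta> f \<epsilon> \<longleftrightarrow>
     (\<forall>x. f x < p) \<and> f 0 = 0 \<and> (\<forall>x. f (- x) = f x) \<and>
     (\<exists>l::nat. gcd (int l - 1) (int p - 1) = 1 \<and>
        (\<forall>a<p. \<forall>x. f (of_nat a * x) = (a ^ l * f x) mod p)) \<and>
     \<epsilon> \<in> {1, -1} \<and>
     (\<exists>fs :: 'a \<Rightarrow> nat. (\<forall>b. fs b < p) \<and>
        (\<forall>b. walsh p (2 * k) \<zeta> f b = of_int \<epsilon> * of_nat p ^ k * \<zeta> ^ (fs b)))"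

end

theory Submission
  imports Defs "Berlekamp_Zassenhaus.Factor_Bound"
begin

(* Let N(i) be the number of x with f(x) = i.  Evaluating the Walsh transform at b = 0 gives
   sum_i N(i) zeta^i = eps * p^k * zeta^j for some j < p.  Since the minimal polynomial of a
   primitive p-th root of unity over Q is 1 + x + ... + x^(p-1) (Eisenstein's criterion applied
   to its shift by 1, plus Gauss's lemma), every integer relation among 1, zeta, ..., zeta^(p-1)
   has all coefficients equal.  Hence the numbers N(i) - [i = j] eps p^k are all equal to
   (p^(2k) - eps p^k) / p = p^(2k-1) - eps p^(k-1), an even number.  On the other hand N(0) is
   odd, since x |-> -x pairs up the nonzero zeros of f in a field of odd order; so j = 0, which
   yields the claimed sizes. *)

definition cyclo_poly :: "nat \<Rightarrow> int poly" where
  "cyclo_poly p = (\<Sum>i<p. [:0, 1:] ^ i)"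

lemma cyclo_poly_shift_mult:
  "[:0, 1:] * pcompose (cyclo_poly p) [:1, 1:] = [:1, 1:] ^ p - 1"
proof -
  have x_shift: "pcompose [:0, 1:] [:1, 1::int:] = [:1, 1:]"
    by (simp add: pcompose_pCons)
  have "[:0, 1:] = pcompose ([:0, 1:] - 1) [:1, 1::int:]"
    by (simp add: pcompose_diff x_shift) (rule poly_eqI, simp add: coeff_pCons split: nat.split)
  also have "\<dots> * pcompose (cyclo_poly p) [:1, 1:] = pcompose ([:0, 1:] ^ p - 1) [:1, 1:]"
    unfolding cyclo_poly_def pcompose_mult[symmetric] power_diff_1_eq ..
  also have "\<dots> = [:1, 1:] ^ p - 1"
    by (simp add: pcompose_diff pcompose_hom.hom_power x_shift)
  finally show ?thesis .
qed

lemma coeff_cyclo_poly_shift: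
  "coeff (pcompose (cyclo_poly p) [:1, 1:]) i = (if i < p then int (p choose Suc i) else 0)"
proof -
  have "coeff (pcompose (cyclo_poly p) [:1, 1:]) i
          = coeff ([:0, 1:] * pcompose (cyclo_poly p) [:1, 1:]) (Suc i)"
    by (simp add: coeff_pCons)
  also have "\<dots> = coeff ([:1, 1::int:] ^ p) (Suc i)"
    unfolding cyclo_poly_shift_mult by simp
  also have "\<dots> = (if i < p then int (p choose Suc i) else 0)"
  proof (cases "i < p")
    case True
    then show ?thesis using coeff_linear_poly_power[of "Suc i" p "1::int" 1] by simp
  next
    case False
    moreover have "degree ([:1, 1::int:] ^ p) = p" by (rule degree_linear_power)
    ultimately show ?thesis by (simp add: coeff_eq_0)
  qed
  finally show ?thesis .
qed

lemma degree_cyclo_poly_shift: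
  assumes "p > 0"
  shows "degree (pcompose (cyclo_poly p) [:1, 1:]) = p - 1"
proof (rule antisym)
  show "degree (pcompose (cyclo_poly p) [:1, 1:]) \<le> p - 1"
    using coeff_cyclo_poly_shift[of p] by (intro degree_le) auto
  show "p - 1 \<le> degree (pcompose (cyclo_poly p) [:1, 1:])"
    using coeff_cyclo_poly_shift[of p "p - 1"] assms by (intro le_degree) simp
qed

lemma degree_cyclo_poly:
  assumes "p > 0"
  shows "degree (cyclo_poly p) = p - 1"
  using degree_cyclo_poly_shift[OF assms] by (simp add: degree_pcompose)

text \<open>Core of Eisenstein's criterion: look at the first coefficient of A not divisible by q;
   the corresponding coefficient of A * B is congruent to it times coeff B 0 modulo q.\<close>

lemma eisenstein_one_side:
  fixes P A B :: "int poly" and q :: int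
  assumes q: "prime q" and P: "P = A * B"
    and A0: "q dvd coeff A 0" and B0: "\<not> q dvd coeff B 0" and lcA: "\<not> q dvd lead_coeff A"
    and deg: "degree A < degree P" and low: "\<forall>i<degree P. q dvd coeff P i"
  shows False
proof -
  define t where "t = (LEAST i. \<not> q dvd coeff A i)"
  have t_nondvd: "\<not> q dvd coeff A t"
    unfolding t_def by (rule LeastI[of _ "degree A"]) (use lcA in simp)
  have t_le: "t \<le> degree A"
    unfolding t_def by (rule Least_le) (use lcA in simp)
  have below_t: "q dvd coeff A i" if "i < t" for i
    using that not_less_Least unfolding t_def by blast
  have "coeff P t = (\<Sum>i<t. coeff A i * coeff B (t - i)) + coeff A t * coeff B 0"
    unfolding P coeff_mult by (simp add: lessThan_Suc_atMost[symmetric])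
  moreover have "q dvd (\<Sum>i<t. coeff A i * coeff B (t - i))"
    by (intro dvd_sum) (simp add: below_t)
  moreover have "q dvd coeff P t"
    using low t_le deg by simp
  ultimately have "q dvd coeff A t * coeff B 0"
    by (simp add: dvd_add_right_iff)
  then show False
    using q t_nondvd B0 by (simp add: prime_dvd_mult_iff)
qed

lemma eisenstein_criterion:
  fixes P A B :: "int poly" and q :: int
  assumes q: "prime q" and P: "P = A * B"
    and low: "\<forall>i<degree P. q dvd coeff P i" and lc: "\<not> q dvd lead_coeff P"
    and const: "\<not> q ^ 2 dvd coeff P 0"
    and dA: "degree A \<ge> 1" and dB: "degree B \<ge> 1"
  shows False
proof -
  have "A \<noteq> 0" "B \<noteq> 0"
    using dA dB by auto
  then have deg: "degree P = degree A + degree B"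
    by (simp add: P degree_mult_eq)
  have lcA: "\<not> q dvd lead_coeff A" and lcB: "\<not> q dvd lead_coeff B"
    using lc unfolding P lead_coeff_mult by auto
  have const_prod: "coeff P 0 = coeff A 0 * coeff B 0"
    by (simp add: P coeff_mult_0)
  moreover have "q dvd coeff P 0"
    using low deg dA by simp
  ultimately have "q dvd coeff A 0 * coeff B 0"
    by simp
  then have "q dvd coeff A 0 \<or> q dvd coeff B 0"
    using q by (simp add: prime_dvd_mult_iff)
  moreover have "\<not> (q dvd coeff A 0 \<and> q dvd coeff B 0)"
    using const const_prod by (auto simp: power2_eq_square intro: mult_dvd_mono)
  moreover have "P = B * A"
    by (simp add: P mult.commute)
  ultimately show False
    using eisenstein_one_side[OF q P _ _ lcA _ low] eisenstein_one_side[OF q _ _ _ lcB _ low]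
      deg dA dB by fastforce
qed

text \<open>Eisenstein applied to cyclo_poly p (x + 1) with the prime p.\<close>

lemma cyclo_poly_no_int_factorisation:
  assumes p: "prime p" and fac: "cyclo_poly p = A * B"
    and dA: "degree A \<ge> 1" and dB: "degree B \<ge> 1"
  shows False
proof -
  define P where "P = pcompose (cyclo_poly p) [:1, 1:]"
  have p0: "p > 0"
    using p by (simp add: prime_gt_0_nat)
  have coeff_P: "coeff P i = (if i < p then int (p choose Suc i) else 0)" for i
    unfolding P_def by (rule coeff_cyclo_poly_shift)
  have deg: "degree P = p - 1"
    unfolding P_def by (rule degree_cyclo_poly_shift[OF p0])
  show False
  proof (rule eisenstein_criterion)
    show "prime (int p)"
      using p by simp
    show "P = pcompose A [:1, 1:] * pcompose B [:1, 1:]"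
      by (simp add: P_def fac pcompose_mult)
    show "\<forall>i<degree P. int p dvd coeff P i"
      using dvd_choose_prime[of _ p] p by (auto simp: coeff_P deg)
    show "\<not> int p dvd lead_coeff P"
      using p p0 prime_gt_1_nat[OF p] by (simp add: deg coeff_P)
    show "\<not> int p ^ 2 dvd coeff P 0"
      using p p0 by (auto simp: coeff_P power2_eq_square prime_gt_1_nat)
    show "degree (pcompose A [:1, 1:]) \<ge> 1" "degree (pcompose B [:1, 1::int:]) \<ge> 1"
      using dA dB by (simp_all add: degree_pcompose)
  qed
qed

text \<open>By Gauss's lemma the same holds over the rationals.\<close>

lemma cyclo_poly_no_rat_factorisation:
  fixes g h :: "rat poly"
  assumes p: "prime p" and fac: "map_poly of_int (cyclo_poly p) = g * h"
    and dg: "degree g \<ge> 1" and dh: "degree h \<ge> 1"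
  shows False
proof -
  obtain g' h' where "cyclo_poly p = g' * h'" "degree g' = degree g" "degree h' = degree h"
    using rat_to_int_factor[OF fac] by blast
  then show False
    using cyclo_poly_no_int_factorisation[OF p] dg dh by metis
qed

lemma sum_powers_root_of_unity:
  fixes z :: complex
  assumes "z ^ p = 1" "z \<noteq> 1"
  shows "(\<Sum>i<p. z ^ i) = 0"
proof -
  have "(z - 1) * (\<Sum>i<p. z ^ i) = 0"
    using power_diff_1_eq[of z p] assms by simp
  then show ?thesis
    using assms by simp
qed

interpretation of_rat_poly_hom: map_poly_idom_hom "of_rat :: rat \<Rightarrow> complex" ..

text \<open>A primitive p-th root of unity is not a root of a nonzero rational polynomial of
   degree < p - 1: the gcd of such a polynomial with the irreducible cyclotomic polynomial would be
   a constant vanishing at z.\<close>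

lemma rat_poly_root_of_unity_eq_0:
  fixes z :: complex and Q :: "rat poly"
  assumes p: "prime p" and z: "z ^ p = 1" "z \<noteq> 1"
    and deg: "degree Q < p - 1" and root: "poly (map_poly of_rat Q) z = 0"
  shows "Q = 0"
proof (rule ccontr)
  assume "Q \<noteq> 0"
  define F :: "rat poly" where "F = map_poly of_int (cyclo_poly p)"
  have "map_poly (of_rat :: rat \<Rightarrow> complex) F = map_poly of_int (cyclo_poly p)"
    unfolding F_def by (simp add: map_poly_map_poly o_def)
  then have F_root: "poly (map_poly of_rat F) z = 0"
    using sum_powers_root_of_unity[OF z]
    by (simp add: cyclo_poly_def of_int_poly_hom.hom_sum poly_sum of_int_poly_hom.hom_power)
  define G where "G = gcd Q F"
  obtain H where FGH: "F = G * H"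
    unfolding G_def by (meson dvdE gcd_dvd2)
  have "degree G \<le> degree Q"
    unfolding G_def by (rule dvd_imp_degree_le[OF gcd_dvd1 \<open>Q \<noteq> 0\<close>])
  moreover have "degree F = p - 1"
    unfolding F_def using degree_cyclo_poly[of p] p by (simp add: prime_gt_0_nat)
  moreover have "F \<noteq> 0"
    using calculation deg by auto
  ultimately have "degree H \<ge> 1"
    using FGH deg \<open>F \<noteq> 0\<close> by (auto simp: degree_mult_eq)
  then have "degree G = 0"
    using cyclo_poly_no_rat_factorisation[OF p FGH[unfolded F_def]] by fastforce
  then obtain a where G_const: "G = [:a:]"
    using degree_0_id by metis
  obtain x y where "x * Q + y * F = G"
    unfolding G_def using bezout_coefficients_fst_snd by blast
  then have "poly (map_poly (of_rat :: rat \<Rightarrow> complex) G) z = 0"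
    using root F_root by (auto simp: of_rat_poly_hom.hom_add of_rat_poly_hom.hom_mult)
  then have "G = 0"
    unfolding G_const
    by (metis map_poly_pCons map_poly_0 poly_pCons poly_0 of_rat_eq_0_iff add_0_right
        mult_zero_right pCons_0_0)
  then show False
    using \<open>F \<noteq> 0\<close> FGH by simp
qed

lemma integer_relation_root_of_unity:
  fixes z :: complex and c :: "nat \<Rightarrow> int"
  assumes p: "prime p" and z: "z ^ p = 1" "z \<noteq> 1"
    and rel: "(\<Sum>i<p. of_int (c i) * z ^ i) = 0"
  shows "\<forall>i<p. c i = c 0"
proof -
  have p1: "p > 1"
    using p prime_gt_1_nat by blast
  then have split_p: "{..<p} = insert (p - 1) {..<p - 1}"
    by auto
  define d where "d i = c i - c (p - 1)" for i
  have "(\<Sum>i<p. of_int (d i) * z ^ i)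
          = (\<Sum>i<p. of_int (c i) * z ^ i) - of_int (c (p - 1)) * (\<Sum>i<p. z ^ i)"
    unfolding sum_distrib_left sum_subtractf[symmetric]
    by (rule sum.cong) (simp_all add: d_def left_diff_distrib)
  also have "\<dots> = 0"
    using rel sum_powers_root_of_unity[OF z] by simp
  finally have d_rel: "(\<Sum>i<p - 1. of_int (d i) * z ^ i) = 0"
    unfolding split_p by (simp add: d_def)
  define Q :: "rat poly" where "Q = (\<Sum>i<p - 1. monom (of_int (d i)) i)"
  have "poly (map_poly of_rat Q) z = 0"
    unfolding Q_def using d_rel by (simp add: of_rat_poly_hom.hom_sum poly_sum poly_monom)
  moreover have "degree Q < p - 1"
    unfolding Q_def
    by (rule degree_sum_less) (use p1 in \<open>auto intro: le_less_trans[OF degree_monom_le]\<close>)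
  ultimately have "Q = 0"
    using rat_poly_root_of_unity_eq_0[OF p z] by blast
  have "d i = 0" if "i < p - 1" for i
  proof -
    have "coeff Q i = of_int (d i)"
      unfolding Q_def coeff_sum coeff_monom using that by simp
    then show ?thesis
      using \<open>Q = 0\<close> by simp
  qed
  then have same: "c i = c (p - 1)" if "i < p" for i
    using that by (cases "i = p - 1") (auto simp: d_def)
  show ?thesis
  proof (intro allI impI)
    fix i assume "i < p"
    then show "c i = c 0"
      using same[of i] same[of 0] p1 by simp
  qed
qed

lemma level_counts_from_single_term:
  fixes z :: complex and N :: "nat \<Rightarrow> nat" and w :: int
  assumes p: "prime p" and z: "z ^ p = 1" "z \<noteq> 1" and j: "j < p"
    and sum_eq: "(\<Sum>i<p. of_nat (N i) * z ^ i) = of_int w * z ^ j"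
    and i: "i < p"
  shows "int p * (int (N i) - (if i = j then w else 0)) = int (\<Sum>i<p. N i) - w"
proof -
  define a where "a i = int (N i) - (if i = j then w else 0)" for i
  have "(\<Sum>i<p. of_int (a i) * z ^ i)
          = (\<Sum>i<p. of_nat (N i) * z ^ i) - (\<Sum>i<p. if i = j then of_int w * z ^ i else 0)"
    unfolding sum_subtractf[symmetric] by (rule sum.cong) (simp_all add: a_def left_diff_distrib)
  also have "\<dots> = 0"
    using sum_eq j by simp
  finally have a_const: "\<forall>i<p. a i = a 0"
    by (rule integer_relation_root_of_unity[OF p z])
  have "int (\<Sum>i<p. N i) - w = (\<Sum>i<p. a i)"
    using j by (simp add: a_def sum_subtractf)
  also have "\<dots> = (\<Sum>_<p. a i)"
  proof (rule sum.cong)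
    show "a k = a i" if "k \<in> {..<p}" for k
      using a_const i that by (metis lessThan_iff)
  qed simp
  also have "\<dots> = int p * a i"
    by simp
  finally show ?thesis
    by (simp add: a_def)
qed

lemma even_card_fixpoint_free_involution:
  assumes "finite B" and "\<And>x. x \<in> B \<Longrightarrow> g x \<in> B \<and> g (g x) = x \<and> g x \<noteq> x"
  shows "even (card B)"
  using assms
proof (induction "card B" arbitrary: B rule: less_induct)
  case less
  show ?case
  proof (cases "B = {}")
    case False
    then obtain x where x: "x \<in> B"
      by blast
    define B' where "B' = B - {x, g x}"
    have gx: "g x \<in> B" "g x \<noteq> x"
      using less.prems(2)[OF x] by auto
    then have "card {x, g x} = 2" "{x, g x} \<subseteq> B"
      using x by auto
    then have card_B: "card B = card B' + 2"
      using less.prems(1) card_mono[OF less.prems(1), of "{x, g x}"]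
      by (simp add: B'_def card_Diff_subset)
    have "even (card B')"
    proof (rule less.hyps)
      show "card B' < card B" "finite B'"
        using card_B less.prems(1) by (simp_all add: B'_def)
      show "g y \<in> B' \<and> g (g y) = y \<and> g y \<noteq> y" if "y \<in> B'" for y
        using less.prems(2)[of y] less.prems(2)[OF x] that unfolding B'_def by auto
    qed
    then show ?thesis
      using card_B by simp
  qed simp
qed

text \<open>A finite field of odd order has characteristic different from 2 (x |-> x + 1 would be
   a fixed-point-free involution otherwise).\<close>

lemma two_neq_zero_if_odd_card:
  assumes "odd (card (UNIV :: 'a::{field,finite} set))"
  shows "(2 :: 'a) \<noteq> 0"
proof
  assume two: "(2 :: 'a) = 0"
  have "even (card (UNIV :: 'a set))"
  proof (rule even_card_fixpoint_free_involution)
    show "x + 1 \<in> UNIV \<and> x + 1 + 1 = x \<and> x + 1 \<noteq> x" for x :: 'a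
      using two by (simp add: add.assoc one_add_one)
  qed simp
  then show False
    using assms by simp
qed

text \<open>In a finite field of odd order a set containing 0 and closed under negation has odd size,
   since x |-> -x pairs up its nonzero elements.\<close>

lemma odd_card_symmetric_set:
  fixes A :: "'a::{field,finite} set"
  assumes odd: "odd (card (UNIV :: 'a set))" and "0 \<in> A" and symm: "\<And>x. x \<in> A \<Longrightarrow> - x \<in> A"
  shows "odd (card A)"
proof -
  have "even (card (A - {0}))"
  proof (rule even_card_fixpoint_free_involution)
    show "- x \<in> A - {0} \<and> - (- x) = x \<and> - x \<noteq> x" if x: "x \<in> A - {0}" for x
    proof -
      have "- x \<noteq> x"
      proof
        assume neg_eq: "- x = x"
        have "x + x = 0"
          using add.right_inverse[of x] by (simp only: neg_eq)
        then have "2 * x = 0"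
          by (simp only: mult_2)
        then show False
          using x two_neq_zero_if_odd_card[OF odd] by simp
      qed
      then show ?thesis
        using x symm by simp
    qed
  qed simp
  moreover have "card A = Suc (card (A - {0}))"
    using \<open>0 \<in> A\<close> by (intro card.remove) simp_all
  ultimately show ?thesis
    by simp
qed

lemma sum_power_by_levels:
  fixes f :: "'a::finite \<Rightarrow> nat" and z :: "'b::comm_semiring_1"
  assumes "\<And>x. f x < p"
  shows "(\<Sum>x\<in>UNIV. z ^ f x) = (\<Sum>i<p. of_nat (card {x. f x = i}) * z ^ i)"
proof -
  have "(\<Sum>x\<in>UNIV. z ^ f x) = (\<Sum>i<p. \<Sum>x\<in>{x. x \<in> UNIV \<and> f x = i}. z ^ f x)"
    using assms by (intro sum.group[symmetric]) auto
  also have "\<dots> = (\<Sum>i<p. of_nat (card {x. f x = i}) * z ^ i)"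
    by (intro sum.cong) auto
  finally show ?thesis .
qed

lemma sum_card_levels:
  fixes f :: "'a::finite \<Rightarrow> nat"
  assumes "\<And>x. f x < p"
  shows "(\<Sum>i<p. card {x. f x = i}) = card (UNIV :: 'a set)"
  using sum_power_by_levels[of f p "1 :: nat"] assms by simp

lemma walsh_at_zero:
  fixes f :: "'a::{field,finite} \<Rightarrow> nat"
  shows "walsh p n z f 0 = z ^ abs_trace p n (0 :: 'a) * (\<Sum>x\<in>UNIV. z ^ f x)"
  by (simp add: walsh_def power_add sum_distrib_left mult.commute)

lemma absorb_root_of_unity_power:
  fixes z S w :: complex
  assumes z: "z ^ p = 1" and "p > 0" and eq: "z ^ a * S = w * z ^ b"
  shows "\<exists>j<p. S = w * z ^ j"
proof -
  have mod_exp: "z ^ n = z ^ (n mod p)" for n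
  proof -
    have "z ^ n = (z ^ p) ^ (n div p) * z ^ (n mod p)"
      by (simp flip: power_mult power_add)
    then show ?thesis
      using z by simp
  qed
  define r where "r = p - a mod p"
  have "z ^ r * z ^ a = z ^ (r + a mod p)"
    by (subst mod_exp[of a]) (simp add: power_add)
  also have "\<dots> = 1"
    using z \<open>p > 0\<close> by (simp add: r_def)
  finally have "S = z ^ r * (z ^ a * S)"
    by (metis mult.assoc mult_1)
  also have "\<dots> = w * z ^ (b + r)"
    unfolding eq by (simp add: power_add mult_ac)
  finally have "S = w * z ^ ((b + r) mod p)"
    by (subst (asm) mod_exp)
  then show ?thesis
    using \<open>p > 0\<close> mod_less_divisor by blast
qed

text \<open>The arithmetic conclusion: parity of the count at 0 singles out j = 0, and the counts
   follow by cancelling p.\<close>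

lemma level_sizes_arithmetic:
  fixes p k :: nat and \<epsilon> :: int and N :: "nat \<Rightarrow> nat"
  assumes "odd p" and "k \<ge> 1" and \<epsilon>: "\<epsilon> \<in> {1, -1}" and "j < p" and odd_N0: "odd (N 0)"
    and levels: "\<And>i. i < p \<Longrightarrow>
      int p * (int (N i) - (if i = j then \<epsilon> * int p ^ k else 0)) = int p ^ (2 * k) - \<epsilon> * int p ^ k"
  shows "j = 0"
    and "int (N 0) = int p ^ (2 * k - 1) + \<epsilon> * (int p ^ k - int p ^ (k - 1))"
    and "\<And>i. i \<in> {1..p - 1} \<Longrightarrow> int (N i) = int p ^ (2 * k - 1) - \<epsilon> * int p ^ (k - 1)"
proof -
  define M where "M = int p ^ (2 * k - 1) - \<epsilon> * int p ^ (k - 1)"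
  have p0: "p > 0"
    using \<open>odd p\<close> by (simp add: odd_pos)
  have "int p ^ (2 * k) - \<epsilon> * int p ^ k = int p * M"
    using \<open>k \<ge> 1\<close> by (cases k) (simp_all add: M_def algebra_simps)
  then have level_eq: "int (N i) - (if i = j then \<epsilon> * int p ^ k else 0) = M" if "i < p" for i
    using levels[OF that] p0 by simp
  have "even M"
    using \<epsilon> \<open>odd p\<close> by (auto simp: M_def)
  show "j = 0"
  proof (rule ccontr)
    assume "j \<noteq> 0"
    then have "int (N 0) = M"
      using level_eq[OF p0] by simp
    then show False
      using \<open>even M\<close> odd_N0 by (metis even_of_nat_iff)
  qed
  then show "int (N 0) = int p ^ (2 * k - 1) + \<epsilon> * (int p ^ k - int p ^ (k - 1))"
    using level_eq[OF p0] \<open>k \<ge> 1\<close> by (cases k) (simp_all add: M_def algebra_simps)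
  show "int (N i) = M" if "i \<in> {1..p - 1}" for i
    using level_eq[of i] that \<open>j = 0\<close> by auto
qed

theorem lemma1:
  fixes p k :: nat and f :: "'a::{field,finite} \<Rightarrow> nat" and \<zeta> :: complex and \<epsilon> :: int
  assumes "prime p" and "odd p" and "k \<ge> 1"
    and "card (UNIV::'a set) = p ^ (2 * k)"
    and "\<zeta> ^ p = 1" and "\<zeta> \<noteq> 1"
    and "conditionA p k \<zeta> f \<epsilon>"
  shows "(\<forall>i\<in>{1..p-1}. card {x. f x = i} = card {x. f x = 1}) \<and>
         int (card {x. f x = 0}) = int p ^ (2 * k - 1) + \<epsilon> * (int p ^ k - int p ^ (k - 1)) \<and>
         (\<forall>i\<in>{1..p-1}. int (card {x. f x = i}) = int p ^ (2 * k - 1) - \<epsilon> * int p ^ (k - 1))"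
proof -
  note p = assms(1) and root = assms(5,6)
  obtain fs where range: "\<forall>x. f x < p" and "f 0 = 0" and symm: "\<forall>x. f (- x) = f x"
    and \<epsilon>: "\<epsilon> \<in> {1, -1}"
    and bent: "\<forall>b. walsh p (2 * k) \<zeta> f b = of_int \<epsilon> * of_nat p ^ k * \<zeta> ^ fs b"
    using assms(7) unfolding conditionA_def by blast
  define N where "N i = card {x::'a. f x = i}" for i
  have "p > 0"
    using p by (simp add: prime_gt_0_nat)
  have "\<zeta> ^ abs_trace p (2 * k) (0 :: 'a) * (\<Sum>i<p. of_nat (N i) * \<zeta> ^ i)
          = of_int (\<epsilon> * int p ^ k) * \<zeta> ^ fs 0"
    using bent[rule_format, of 0]
    unfolding walsh_at_zero sum_power_by_levels[OF range[rule_format]] N_def by simp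
  then obtain j where "j < p"
    and sum_eq: "(\<Sum>i<p. of_nat (N i) * \<zeta> ^ i) = of_int (\<epsilon> * int p ^ k) * \<zeta> ^ j"
    using absorb_root_of_unity_power[OF root(1) \<open>p > 0\<close>] by blast
  have total: "int (\<Sum>i<p. N i) = int p ^ (2 * k)"
    unfolding N_def sum_card_levels[OF range[rule_format]] assms(4) by simp
  have levels: "int p * (int (N i) - (if i = j then \<epsilon> * int p ^ k else 0))
                  = int p ^ (2 * k) - \<epsilon> * int p ^ k" if "i < p" for i
    using level_counts_from_single_term[OF p root \<open>j < p\<close> sum_eq that] unfolding total .
  have "odd (N 0)"
    unfolding N_def
  proof (rule odd_card_symmetric_set)
    show "odd (card (UNIV :: 'a set))" "0 \<in> {x. f x = 0}"
      using assms(2,4) \<open>f 0 = 0\<close> by simp_all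
    show "- x \<in> {x. f x = 0}" if "x \<in> {x. f x = 0}" for x
      using symm that by simp
  qed
  note sizes = level_sizes_arithmetic[OF assms(2,3) \<epsilon> \<open>j < p\<close> \<open>odd (N 0)\<close> levels]
  have "1 \<in> {1..p - 1}"
    using prime_gt_1_nat[OF p] by simp
  then have "\<forall>i\<in>{1..p - 1}. N i = N 1"
    using sizes(3) by (metis of_nat_eq_iff)
  then show ?thesis
    using sizes(2,3) unfolding N_def by blast
qed

end
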